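(* Let $m\ge n$, let $p\in(0,1)$ be rational and $\varepsilon>0$. Let $f:\mathbb{R}^{m\times n}\to\mathbb{R}$ be proper, bounded below, semi-algebraic, coercive and $L$-smooth (gradient $L$-Lipschitz in Frobenius norm), and let $$F(X)=f(X)+\sum_{i=1}^n(|\sigma_i(X)|+\varepsilon)^p,$$ where $\sigma_1(X)\ge\cdots\ge\sigma_n(X)$ are the singular values. Fix $0<\mu<1/L$, a starting point $X_0$, and for $t\ge0$ let $w_{t,i}=p/(\sigma_i(X_t)+\varepsilon)^{1-p}$ and $$X_{t+1}\in\arg\min_{X}\ \tfrac12\big\|X-(X_t-\mu\nabla f(X_t))\big\|_F^2+\mu\sum_{i=1}^n w_{t,i}|\sigma_i(X)|.$$ Let $\mathrm{limit}(X_0)$ be the set of matrices $\hat X$ such that $X_{t_l}\to\hat X$ for some increasing sequence of integers $t_l$. Then: (i) $\emptyset\neq\mathrm{limit}(X_0)\subset\mathrm{crit}(F)$, where $\mathrm{crit}(F)=\{X:0\in\partial F(X)\}$; (ii) $\lim_{t\to\infty}\mathrm{dist}(X_t,\mathrm{limit}(X_0))=0$; (iii) $\mathrm{limit}(X_0)$ is non-empty, compact and connected; (iv) $F$ is finite and constant on $\mathrm{limit}(X_0)$.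
   Context: $\partial F$ is the limiting subdifferential (limits of regular subgradients $y^k\in\hat\partial F(x^k)$ along $x^k\to x$ with $F(x^k)\to F(x)$, where $y\in\hat\partial F(x)$ iff $\liminf_{z\to0}\frac{F(x+z)-F(x)-\langle y,z\rangle}{\|z\|}\ge0$). $\mathrm{dist}(X,S)=\inf_{Y\in S}\|Y-X\|_F$. Semi-algebraic: graph is a finite union of finite intersections of sets $\{\zeta=0,\zeta'<0\}$ with $\zeta,\zeta'$ polynomials. Coercive: $f(X)\to\infty$ as $\|X\|_F\to\infty$. *)

theory Defs
  imports "HOL-Analysis.Analysis"
begin

text \<open>Matrices in R^{m x n} are rendered as real^'n^'m (rows indexed by 'm, columns by 'n).
  On this type, norm is the Frobenius norm and inner is the Frobenius inner product.\<close>

definition svd_values :: "real^'n^'m \<Rightarrow> (nat \<Rightarrow> real) \<Rightarrow> bool" where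
  "svd_values X s \<longleftrightarrow>
     (\<forall>i. CARD('n) \<le> i \<longrightarrow> s i = 0) \<and>
     (\<forall>i < CARD('n). 0 \<le> s i) \<and>
     (\<forall>i j. i \<le> j \<longrightarrow> j < CARD('n) \<longrightarrow> s j \<le> s i) \<and>
     (\<exists>(U::real^'m^'m) (V::real^'n^'n) (g::'n \<Rightarrow> 'm) (e::nat \<Rightarrow> 'n).
        orthogonal_matrix U \<and> orthogonal_matrix V \<and> inj g \<and>
        bij_betw e {..<CARD('n)} UNIV \<and>
        X = U ** (\<chi> a b. if a = g b then s (inv_into {..<CARD('n)} e b) else 0) ** transpose V)"

text \<open>sigma X i = the (i+1)-th largest singular value of X (i < n).\<close>
definition sing_val :: "real^'n^'m \<Rightarrow> nat \<Rightarrow> real" where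
  "sing_val X = (THE s. svd_values X s)"

inductive poly_fun :: "('a::euclidean_space \<Rightarrow> real) \<Rightarrow> bool" where
  const: "poly_fun (\<lambda>x. c)"
| coord: "b \<in> Basis \<Longrightarrow> poly_fun (\<lambda>x. x \<bullet> b)"
| add: "poly_fun p \<Longrightarrow> poly_fun q \<Longrightarrow> poly_fun (\<lambda>x. p x + q x)"
| mult: "poly_fun p \<Longrightarrow> poly_fun q \<Longrightarrow> poly_fun (\<lambda>x. p x * q x)"

definition semialgebraic_set :: "'a::euclidean_space set \<Rightarrow> bool" where
  "semialgebraic_set S \<longleftrightarrow>
     (\<exists>(k::nat) (l::nat) \<zeta> \<zeta>'. (\<forall>i<k. \<forall>j<l. poly_fun (\<zeta> i j) \<and> poly_fun (\<zeta>' i j)) \<and>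
        S = (\<Union>i<k. \<Inter>j<l. {x. \<zeta> i j x = 0 \<and> \<zeta>' i j x < 0}))"

definition semialgebraic_fun :: "('a::euclidean_space \<Rightarrow> real) \<Rightarrow> bool" where
  "semialgebraic_fun f \<longleftrightarrow> semialgebraic_set {(x, f x) | x. True}"

definition regular_subdiff :: "('a::real_inner \<Rightarrow> real) \<Rightarrow> 'a \<Rightarrow> 'a set" where
  "regular_subdiff F x =
     {y. Liminf (at 0) (\<lambda>z. ereal ((F (x + z) - F x - inner y z) / norm z)) \<ge> 0}"

definition limiting_subdiff :: "('a::real_inner \<Rightarrow> real) \<Rightarrow> 'a \<Rightarrow> 'a set" where
  "limiting_subdiff F x =
     {y. \<exists>xk yk. xk \<longlonglongrightarrow> x \<and> (\<lambda>k. F (xk k)) \<longlonglongrightarrow> F x \<and>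
                (\<forall>k. yk k \<in> regular_subdiff F (xk k)) \<and> yk \<longlonglongrightarrow> y}"

definition crit :: "('a::real_inner \<Rightarrow> real) \<Rightarrow> 'a set" where
  "crit F = {x. 0 \<in> limiting_subdiff F x}"

definition limit_set :: "(nat \<Rightarrow> 'a::topological_space) \<Rightarrow> 'a set" where
  "limit_set Xs = {Xh. \<exists>r. strict_mono r \<and> (Xs \<circ> r) \<longlonglongrightarrow> Xh}"

end

theory Submission
  imports Defs
begin

text \<open>The step is a majorise--minimise scheme. The quadratic upper bound for the \<open>L\<close>-smooth part
  and the tangent lines of the concave map \<open>a \<mapsto> (a + \<epsilon>) powr p\<close> at the current singular
  values majorise \<open>F\<close> by the objective of the step, so \<open>F\<close> decreases by at least \<open>(1/\<mu> - L)/2\<close>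
  times the squared step length. Hence \<open>F\<close> converges along the iterates, the steps tend to zero
  and, by coercivity, the iterates are bounded; the limit set of a bounded sequence with vanishing
  steps is nonempty, compact and connected, and the continuous \<open>F\<close> is constant on it. Passing to
  the limit in the step inequality shows that every limit point is a fixed point of its own
  reweighted step, and comparing the step objective with \<open>F\<close> near such a point gives \<open>0\<close> as a
  regular subgradient. Singular values enter only through nonnegativity and Weyl's bound
  \<open>\<bar>\<sigma>\<^sub>i(X) - \<sigma>\<^sub>i(Y)\<bar> \<le> \<parallel>X - Y\<parallel>\<close>, which follows from the Courant--Fischer characterisation once
  the singular value decomposition is constructed.\<close>

section \<open>Singular values\<close>

lemma linear_coeff_zero_if_quadratic_nonpos:
  fixes a b :: real
  assumes "\<And>t. 2 * t * a + t\<^sup>2 * b \<le> 0"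
  shows "a = 0"
proof -
  define c where "c = \<bar>b\<bar> + 1"
  have "c > 0" by (simp add: c_def)
  have "2 * (a / c) * a + (a / c)\<^sup>2 * b \<le> 0" by (rule assms)
  then have "a\<^sup>2 * (2 * c + b) \<le> 0"
    using \<open>c > 0\<close> by (simp add: field_simps power2_eq_square)
  moreover have "2 * c + b > 0"
    unfolding c_def by (smt (verit) abs_ge_minus_self)
  ultimately show ?thesis
    by (simp add: mult_le_0_iff)
qed

text \<open>Otherwise \<open>x\<close> could be moved towards \<open>y\<close> to be stretched further: the coefficient of \<open>t\<close>
  in \<open>\<parallel>f (x + t y)\<parallel>\<^sup>2 - \<parallel>f x\<parallel>\<^sup>2 \<parallel>x + t y\<parallel>\<^sup>2 \<le> 0\<close> is \<open>2 (f x \<bullet> f y)\<close>.\<close>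
lemma orthogonal_image_of_norm_attaining:
  fixes f :: "'a::real_inner \<Rightarrow> 'b::real_inner"
  assumes f: "linear f" and W: "subspace W" and x: "x \<in> W" "norm x = 1"
    and attains: "\<And>v. v \<in> W \<Longrightarrow> norm (f v) \<le> norm (f x) * norm v"
    and y: "y \<in> W" "orthogonal x y"
  shows "orthogonal (f x) (f y)"
  unfolding orthogonal_def
proof (rule linear_coeff_zero_if_quadratic_nonpos)
  fix t :: real
  define v where "v = x + t *\<^sub>R y"
  have "v \<in> W"
    using W x y by (simp add: v_def subspace_add subspace_scale)
  have "(norm v)\<^sup>2 = 1 + t\<^sup>2 * (norm y)\<^sup>2"
    using x y unfolding power2_norm_eq_inner norm_eq_1
    by (simp add: v_def inner_add_left inner_add_right orthogonal_def inner_commute power2_eq_square)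
  moreover have "(norm (f v))\<^sup>2
      = (norm (f x))\<^sup>2 + 2 * t * (f x \<bullet> f y) + t\<^sup>2 * (norm (f y))\<^sup>2"
    unfolding power2_norm_eq_inner
    by (simp add: v_def linear_add[OF f] linear_scale[OF f] inner_add_left inner_add_right
        inner_commute power2_eq_square algebra_simps)
  moreover have "(norm (f v))\<^sup>2 \<le> (norm (f x) * norm v)\<^sup>2"
    using attains[OF \<open>v \<in> W\<close>] by (simp add: power_mono)
  ultimately show "2 * t * (f x \<bullet> f y) + t\<^sup>2 * ((norm (f y))\<^sup>2 - (norm (f x))\<^sup>2 * (norm y)\<^sup>2) \<le> 0"
    by (simp add: power_mult_distrib algebra_simps)
qed

lemma linear_attains_norm_on_subspace:
  fixes f :: "'a::euclidean_space \<Rightarrow> 'b::real_normed_vector"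
  assumes f: "linear f" and W: "subspace W" and "W \<noteq> {0}"
  obtains x where "x \<in> W" "norm x = 1" "\<And>v. v \<in> W \<Longrightarrow> norm (f v) \<le> norm (f x) * norm v"
proof -
  let ?K = "sphere 0 1 \<inter> W"
  obtain z where z: "z \<in> W" "z \<noteq> 0"
    using \<open>W \<noteq> {0}\<close> subspace_0[OF W] by blast
  then have "z /\<^sub>R norm z \<in> ?K"
    using W by (simp add: subspace_scale)
  moreover have "compact ?K"
    using compact_sphere closed_subspace[OF W] by (rule compact_Int_closed)
  moreover have "continuous_on ?K (\<lambda>v. norm (f v))"
    using f by (intro continuous_on_norm linear_continuous_on linear_conv_bounded_linear[THEN iffD1])
  ultimately obtain x where x: "x \<in> ?K" and max: "\<And>u. u \<in> ?K \<Longrightarrow> norm (f u) \<le> norm (f x)"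
    using continuous_attains_sup[of ?K "\<lambda>v. norm (f v)"] by blast
  have "norm (f v) \<le> norm (f x) * norm v" if "v \<in> W" for v
  proof (cases "v = 0")
    case False
    then have "norm (f (v /\<^sub>R norm v)) \<le> norm (f x)"
      using that W by (intro max) (simp add: subspace_scale)
    then show ?thesis
      using False by (simp add: linear_scale[OF f] field_simps)
  qed (simp add: linear_0[OF f])
  with x that show ?thesis by auto
qed

lemma orthonormal_basis_with_orthogonal_image:
  fixes f :: "'a::euclidean_space \<Rightarrow> 'b::real_inner"
  assumes f: "linear f" and "subspace W"
  shows "\<exists>B. B \<subseteq> W \<and> span B = W \<and> pairwise orthogonal B \<and> (\<forall>v\<in>B. norm v = 1)
      \<and> pairwise (\<lambda>u v. orthogonal (f u) (f v)) B"
  using \<open>subspace W\<close>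
proof (induction "dim W" arbitrary: W rule: less_induct)
  case less
  show ?case
  proof (cases "W = {0}")
    case True
    then show ?thesis by (intro exI[of _ "{}"]) auto
  next
    case False
    then obtain x where x: "x \<in> W" "norm x = 1"
      and attains: "\<And>v. v \<in> W \<Longrightarrow> norm (f v) \<le> norm (f x) * norm v"
      using linear_attains_norm_on_subspace[OF f less.prems] by blast
    define W' where "W' = W \<inter> {y. orthogonal x y}"
    have W': "subspace W'"
      unfolding W'_def by (intro subspace_inter less.prems subspace_orthogonal_to_vector)
    have "x \<notin> W'"
      using x by (simp add: W'_def orthogonal_def dot_square_norm)
    then have "W' \<subset> W"
      using x by (auto simp: W'_def)
    then have "dim W' < dim W"
      using dim_psubset less.prems W' by (metis span_eq_iff)
    then obtain B' where B': "B' \<subseteq> W'" "span B' = W'" "pairwise orthogonal B'" "\<forall>v\<in>B'. norm v = 1"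
      "pairwise (\<lambda>u v. orthogonal (f u) (f v)) B'"
      using less.hyps W' by blast
    have "W \<subseteq> span (insert x B')"
    proof
      fix y assume "y \<in> W"
      then have "y - (x \<bullet> y) *\<^sub>R x \<in> span B'"
        using x less.prems B'(2)
        by (simp add: W'_def orthogonal_def subspace_diff subspace_scale inner_diff_right dot_square_norm)
      then have "y - (x \<bullet> y) *\<^sub>R x + (x \<bullet> y) *\<^sub>R x \<in> span (insert x B')"
        by (meson span_add span_base span_mono span_mul insertI1 subset_insertI subsetD)
      then show "y \<in> span (insert x B')" by simp
    qed
    moreover have "insert x B' \<subseteq> W"
      using x B'(1) by (auto simp: W'_def)
    moreover have "\<forall>y\<in>B'. orthogonal x y \<and> orthogonal (f x) (f y)"
      using B'(1) x attains less.prems by (auto simp: W'_def intro: orthogonal_image_of_norm_attaining[OF f])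
    ultimately show ?thesis
      using B' x less.prems
      by (intro exI[of _ "insert x B'"])
        (auto simp: pairwise_insert orthogonal_commute span_minimal subset_antisym)
  qed
qed

lemma orthonormal_basis_superset:
  fixes P :: "'a::euclidean_space set"
  assumes P: "pairwise orthogonal P" "\<And>p. p \<in> P \<Longrightarrow> norm p = 1"
  obtains B where "P \<subseteq> B" "pairwise orthogonal B" "\<And>b. b \<in> B \<Longrightarrow> norm b = 1"
    "card B = DIM('a)"
proof -
  obtain U where U: "U \<inter> insert 0 P = {}" "pairwise orthogonal (P \<union> U)" "span (P \<union> U) = span (P \<union> UNIV)"
    using orthogonal_extension_strong[OF P(1)] by blast
  define B where "B = P \<union> sgn ` U"
  have orth_sgn: "orthogonal a (sgn b)" "orthogonal (sgn b) a" if "orthogonal a b" for a b :: 'a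
    using that by (simp_all add: sgn_div_norm orthogonal_clauses orthogonal_commute)
  have orth: "pairwise orthogonal B"
    using U(1,2) unfolding B_def pairwise_def by (auto intro!: orth_sgn; metis Un_iff disjoint_iff)
  have unit: "norm b = 1" if "b \<in> B" for b
    using that P(2) U(1) by (auto simp: B_def norm_sgn)
  have "P \<union> U \<subseteq> span B"
  proof -
    have "u \<in> span B" if "u \<in> U" for u
    proof -
      have "norm u *\<^sub>R sgn u \<in> span B"
        using that by (intro span_mul span_base) (simp add: B_def)
      then show ?thesis
        using that U(1) by (metis disjoint_iff insertCI norm_eq_zero scaleR_one sgn_div_norm
            right_inverse scaleR_scaleR)
    qed
    then show ?thesis by (auto simp: B_def span_base)
  qed
  then have "span B = UNIV"
    using U(3) by (metis span_UNIV span_minimal subspace_span sup_top_right top.extremum_uniqueI)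
  moreover have "independent B"
    using orth unit by (metis pairwise_orthogonal_independent norm_zero zero_neq_one)
  ultimately have "card B = DIM('a)"
    by (metis dim_UNIV dim_span_eq_card_independent)
  with orth unit show ?thesis
    by (intro that[of B]) (auto simp: B_def)
qed

lemma orthogonal_matrix_with_columns:
  fixes v :: "'m \<Rightarrow> real^'m" and A :: "'m set"
  assumes unit: "\<And>a. a \<in> A \<Longrightarrow> norm (v a) = 1"
    and orth: "\<And>a b. a \<in> A \<Longrightarrow> b \<in> A \<Longrightarrow> a \<noteq> b \<Longrightarrow> orthogonal (v a) (v b)"
  obtains U :: "real^'m^'m" where "orthogonal_matrix U" "\<And>a. a \<in> A \<Longrightarrow> column a U = v a"
proof -
  have inj: "inj_on v A"
    using unit orth by (metis inj_onI norm_zero orthogonal_self zero_neq_one)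
  have "pairwise orthogonal (v ` A)"
    using orth by (auto simp: pairwise_def)
  then obtain B where B: "v ` A \<subseteq> B" "pairwise orthogonal B" "\<And>b. b \<in> B \<Longrightarrow> norm b = 1"
    "card B = CARD('m)"
    using orthonormal_basis_superset[of "v ` A"] unit by auto
  have "finite B"
    using B(4) by (simp add: card_ge_0_finite)
  have "card (B - v ` A) = card (- A)"
    using B(1,4) inj \<open>finite B\<close>
    by (simp add: card_Diff_subset card_image Compl_eq_Diff_UNIV finite_subset)
  then obtain \<phi> where \<phi>: "bij_betw \<phi> (- A) (B - v ` A)"
    using finite_same_card_bij[of "- A" "B - v ` A"] \<open>finite B\<close> by auto
  define c where "c a = (if a \<in> A then v a else \<phi> a)" for a
  have "inj c"
    using inj \<phi> unfolding inj_def bij_betw_def inj_on_def c_def by (metis Compl_iff Diff_iff image_eqI)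
  have cB: "c a \<in> B" for a
    using B(1) \<phi> by (auto simp: c_def bij_betw_def)
  have "orthogonal (c i) (c j)" if "i \<noteq> j" for i j
    using B(2) \<open>inj c\<close> cB that by (metis inj_eq pairwise_def)
  then have "orthogonal_matrix (\<chi> i j. c j $ i)"
    using B(3) cB by (simp add: orthogonal_matrix_orthonormal_columns column_def)
  then show ?thesis
    using that by (simp add: column_def c_def)
qed

lemma column_matrix_mult: "column j (A ** B) = A *v column j B"
  by (simp add: column_def matrix_matrix_mult_def matrix_vector_mult_def vec_eq_iff)

lemma orthogonal_matrix_orthogonal_columns:
  fixes X :: "real^'n^'m"
  obtains V :: "real^'n^'n" where "orthogonal_matrix V"
    "\<And>i j. i \<noteq> j \<Longrightarrow> orthogonal (column i (X ** V)) (column j (X ** V))"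
proof -
  obtain B where B: "span B = UNIV" "pairwise orthogonal B" "\<forall>v\<in>B. norm v = 1"
    "pairwise (\<lambda>u v. orthogonal (X *v u) (X *v v)) B"
    using orthonormal_basis_with_orthogonal_image[OF matrix_vector_mul_linear subspace_UNIV, of X]
    by auto
  have "independent B"
    using B(2,3) by (metis pairwise_orthogonal_independent norm_zero zero_neq_one)
  then have "finite B" "card B = CARD('n)"
    using B(1) by (auto simp: finiteI_independent dim_span_eq_card_independent[symmetric])
  then obtain \<beta> :: "'n \<Rightarrow> real^'n" where \<beta>: "bij_betw \<beta> UNIV B"
    using finite_same_card_bij[of "UNIV :: 'n set" B] by auto
  have distinct: "\<beta> i \<in> B" "\<beta> j \<in> B" "\<beta> i \<noteq> \<beta> j" if "i \<noteq> j" for i j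
    using \<beta> that by (auto simp: bij_betw_def inj_eq)
  have "orthogonal_matrix (\<chi> r c. \<beta> c $ r)"
    using \<beta> B(3) distinct B(2)
    by (auto simp: orthogonal_matrix_orthonormal_columns column_def pairwise_def bij_betw_def)
  moreover have "i \<noteq> j \<Longrightarrow> orthogonal (X *v \<beta> i) (X *v \<beta> j)" for i j
    using distinct B(4) by (simp add: pairwise_def)
  moreover have "column c (\<chi> r c. \<beta> c $ r) = \<beta> c" for c
    by (simp add: column_def vec_eq_iff)
  ultimately show ?thesis
    by (intro that[of "\<chi> r c. \<beta> c $ r"]) (simp_all add: column_matrix_mult)
qed

lemma orthogonal_columns_factorization:
  fixes Y :: "real^'n^'m" and g :: "'n \<Rightarrow> 'm"
  assumes g: "inj g" and orth: "\<And>i j. i \<noteq> j \<Longrightarrow> orthogonal (column i Y) (column j Y)"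
  obtains U :: "real^'m^'m" where "orthogonal_matrix U"
    "Y = U ** (\<chi> a b. if a = g b then norm (column b Y) else 0)"
proof -
  define K where "K = {b. column b Y \<noteq> 0}"
  define u where "u b = column b Y /\<^sub>R norm (column b Y)" for b
  have unit: "norm (u b) = 1" if "b \<in> K" for b
    using that by (simp add: u_def K_def)
  have orth_u: "orthogonal (u b) (u b')" if "b \<noteq> b'" for b b'
    using orth[OF that] by (simp add: u_def orthogonal_def)
  have "\<exists>U :: real^'m^'m. orthogonal_matrix U \<and> (\<forall>a\<in>g ` K. column a U = u (inv g a))"
    by (rule orthogonal_matrix_with_columns[of "g ` K" "\<lambda>a. u (inv g a)"])
      (use unit orth_u g in \<open>auto simp: inj_eq\<close>)
  then obtain U :: "real^'m^'m" where U: "orthogonal_matrix U"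
    and colU: "\<And>b. b \<in> K \<Longrightarrow> column (g b) U = u b"
    using g by auto
  have "Y $ r $ c = (U ** (\<chi> a b. if a = g b then norm (column b Y) else 0)) $ r $ c" for r c
  proof -
    have "(U ** (\<chi> a b. if a = g b then norm (column b Y) else 0)) $ r $ c
        = column (g c) U $ r * norm (column c Y)"
      by (simp add: matrix_matrix_mult_def column_def if_distrib[of "(*) _"] cong: if_cong)
    also have "\<dots> = Y $ r $ c"
      using colU[of c] by (cases "c \<in> K") (auto simp: K_def u_def column_def vec_eq_iff)
    finally show ?thesis ..
  qed
  then show ?thesis
    using U that by (simp add: vec_eq_iff)
qed

lemma sorted_enumeration:
  fixes h :: "'a::finite \<Rightarrow> 'b::linorder"
  obtains e where "bij_betw e {..<CARD('a)} UNIV"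
    "\<And>i j. i \<le> j \<Longrightarrow> j < CARD('a) \<Longrightarrow> h (e j) \<le> h (e i)"
proof -
  obtain xs :: "'a list" where xs: "set xs = UNIV" "distinct xs"
    using finite_distinct_list[OF finite_class.finite_UNIV] by blast
  define ys where "ys = rev (sort_key h xs)"
  have ys: "set ys = UNIV" "distinct ys" "length ys = CARD('a)" "sorted (rev (map h ys))"
    using xs by (auto simp: ys_def rev_map[symmetric] distinct_card[symmetric])
  show ?thesis
  proof
    show "bij_betw ((!) ys) {..<CARD('a)} UNIV"
      using ys by (intro bij_betw_nth) auto
    show "h (ys ! j) \<le> h (ys ! i)" if "i \<le> j" "j < CARD('a)" for i j
      using sorted_rev_nth_mono[OF ys(4) that(1)] that ys(3) by simp
  qed
qed

lemma norm_vec_power2: "(norm x)\<^sup>2 = (\<Sum>i\<in>UNIV. (x $ i)\<^sup>2)" for x :: "real^'n"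
  unfolding power2_norm_eq_inner by (simp add: inner_vec_def power2_eq_square)

lemma norm_orthogonal_matrix_vector_mult:
  fixes V :: "real^'n^'n"
  assumes "orthogonal_matrix V"
  shows "norm (V *v x) = norm x"
  using assms orthogonal_transformation_norm
  by (metis matrix_of_matrix_vector_mul matrix_vector_mul_linear orthogonal_transformation_matrix)

lemma svd_values_exist:
  fixes X :: "real^'n^'m"
  assumes "CARD('n) \<le> CARD('m)"
  obtains s where "svd_values X s"
proof -
  obtain V :: "real^'n^'n" where V: "orthogonal_matrix V"
    and orth: "\<And>i j. i \<noteq> j \<Longrightarrow> orthogonal (column i (X ** V)) (column j (X ** V))"
    using orthogonal_matrix_orthogonal_columns by blast
  define \<sigma> where "\<sigma> b = norm (column b (X ** V))" for b
  obtain e where e: "bij_betw e {..<CARD('n)} UNIV"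
    and sorted: "\<And>i j. i \<le> j \<Longrightarrow> j < CARD('n) \<Longrightarrow> \<sigma> (e j) \<le> \<sigma> (e i)"
    using sorted_enumeration by blast
  define s where "s i = (if i < CARD('n) then \<sigma> (e i) else 0)" for i
  have s_inv: "s (inv_into {..<CARD('n)} e b) = \<sigma> b" for b
  proof -
    have "inv_into {..<CARD('n)} e b < CARD('n)"
      using bij_betw_inv_into[OF e] by (auto simp: bij_betw_def)
    moreover have "e (inv_into {..<CARD('n)} e b) = b"
      using e by (simp add: bij_betw_inv_into_right)
    ultimately show ?thesis by (simp add: s_def)
  qed
  obtain g :: "'n \<Rightarrow> 'm" where g: "inj g"
    using assms card_le_inj[of "UNIV :: 'n set" "UNIV :: 'm set"] by auto
  obtain U :: "real^'m^'m" where U: "orthogonal_matrix U"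
    and XV: "X ** V = U ** (\<chi> a b. if a = g b then \<sigma> b else 0)"
    using orthogonal_columns_factorization[OF g orth] unfolding \<sigma>_def by blast
  have "X = X ** V ** transpose V"
    using V by (simp add: orthogonal_matrix_def flip: matrix_mul_assoc)
  also have "\<dots> = U ** (\<chi> a b. if a = g b then s (inv_into {..<CARD('n)} e b) else 0) ** transpose V"
    by (simp only: XV s_inv)
  finally have "svd_values X s"
    unfolding svd_values_def using U V g e sorted by (simp add: s_def \<sigma>_def; blast)
  then show ?thesis ..
qed

lemma svd_values_nonneg: "svd_values X s \<Longrightarrow> 0 \<le> s i"
  for X :: "real^'n^'m"
  unfolding svd_values_def by (cases "i < CARD('n)") auto

lemma svd_values_eq_0: "svd_values X s \<Longrightarrow> CARD('n) \<le> i \<Longrightarrow> s i = 0"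
  for X :: "real^'n^'m"
  unfolding svd_values_def by blast

lemma svd_values_antimono: "svd_values X s \<Longrightarrow> i \<le> j \<Longrightarrow> j < CARD('n) \<Longrightarrow> s j \<le> s i"
  for X :: "real^'n^'m"
  unfolding svd_values_def by blast

lemma svd_values_norm_expansion:
  fixes X :: "real^'n^'m"
  assumes "svd_values X s"
  obtains V :: "real^'n^'n" and idx :: "'n \<Rightarrow> nat"
  where "orthogonal_matrix V" "bij_betw idx UNIV {..<CARD('n)}"
    "\<And>y. (norm (X *v (V *v y)))\<^sup>2 = (\<Sum>b\<in>UNIV. (s (idx b) * y $ b)\<^sup>2)"
proof -
  obtain U :: "real^'m^'m" and V :: "real^'n^'n" and g :: "'n \<Rightarrow> 'm" and e :: "nat \<Rightarrow> 'n"
    where U: "orthogonal_matrix U" and V: "orthogonal_matrix V" and g: "inj g"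
      and e: "bij_betw e {..<CARD('n)} UNIV"
      and X: "X = U ** (\<chi> a b. if a = g b then s (inv_into {..<CARD('n)} e b) else 0) ** transpose V"
    using assms unfolding svd_values_def by blast
  define idx where "idx = inv_into {..<CARD('n)} e"
  define D :: "real^'n^'m" where "D = (\<chi> a b. if a = g b then s (idx b) else 0)"
  have "(norm (X *v (V *v y)))\<^sup>2 = (\<Sum>b\<in>UNIV. (s (idx b) * y $ b)\<^sup>2)" for y
  proof -
    have "X ** V = U ** D"
      using V unfolding X D_def idx_def by (simp add: orthogonal_matrix flip: matrix_mul_assoc)
    then have "X *v (V *v y) = U *v (D *v y)"
      by (simp add: matrix_vector_mul_assoc)
    then have "(norm (X *v (V *v y)))\<^sup>2 = (\<Sum>a\<in>UNIV. ((D *v y) $ a)\<^sup>2)"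
      by (simp add: norm_orthogonal_matrix_vector_mult[OF U] norm_vec_power2)
    also have "\<dots> = (\<Sum>a\<in>range g. ((D *v y) $ a)\<^sup>2)"
      by (rule sum.mono_neutral_right) (auto simp: D_def matrix_vector_mult_def intro!: sum.neutral)
    also have "\<dots> = (\<Sum>b\<in>UNIV. ((D *v y) $ g b)\<^sup>2)"
      using g by (simp add: sum.reindex)
    also have "\<dots> = (\<Sum>b\<in>UNIV. (s (idx b) * y $ b)\<^sup>2)"
      using g by (simp add: D_def matrix_vector_mult_def inj_eq if_distrib[of "\<lambda>x. x * _"] cong: if_cong)
    finally show ?thesis .
  qed
  moreover have "bij_betw idx UNIV {..<CARD('n)}"
    unfolding idx_def by (rule bij_betw_inv_into[OF e])
  ultimately show ?thesis
    using that V by blast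
qed

lemma dim_image_coordinate_subspace:
  fixes V :: "real^'n^'n"
  assumes "orthogonal_matrix V"
  shows "dim ((*v) V ` {y. \<forall>b. b \<notin> d \<longrightarrow> y $ b = 0}) = card d"
proof -
  have "inj ((*v) V)"
    using assms by (metis inj_on_inverseI matrix_vector_mul_assoc matrix_vector_mul_lid orthogonal_matrix)
  then have "dim ((*v) V ` {y. \<forall>b. b \<notin> d \<longrightarrow> y $ b = 0}) = dim {y::real^'n. \<forall>b. b \<notin> d \<longrightarrow> y $ b = 0}"
    by (intro dim_image_eq matrix_vector_mul_linear) (auto intro: inj_on_subset)
  also have "\<dots> = card d"
    using dim_substandard_cart[where 'a=real and d=d] unfolding dim_vec_eq .
  finally show ?thesis .
qed

lemma subspace_image_coordinate_subspace:
  fixes V :: "real^'n^'n"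
  shows "subspace ((*v) V ` {y. \<forall>b. b \<notin> d \<longrightarrow> y $ b = 0})"
  by (intro linear_subspace_image matrix_vector_mul_linear) (auto simp: subspace_def)

lemma norm_le_weighted_coords:
  fixes y :: "real^'n"
  assumes "\<And>b. y $ b \<noteq> 0 \<Longrightarrow> 0 \<le> c \<and> c \<le> a b"
  shows "(c * norm y)\<^sup>2 \<le> (\<Sum>b\<in>UNIV. (a b * y $ b)\<^sup>2)"
proof -
  have "(c * y $ b)\<^sup>2 \<le> (a b * y $ b)\<^sup>2" for b
    using assms[of b] by (cases "y $ b = 0") (auto simp: power_mult_distrib intro!: mult_right_mono power_mono)
  then show ?thesis
    by (simp add: power_mult_distrib norm_vec_power2 sum_distrib_left sum_mono)
qed

lemma weighted_coords_le_norm: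
  fixes y :: "real^'n"
  assumes "\<And>b. y $ b \<noteq> 0 \<Longrightarrow> 0 \<le> a b \<and> a b \<le> c"
  shows "(\<Sum>b\<in>UNIV. (a b * y $ b)\<^sup>2) \<le> (c * norm y)\<^sup>2"
proof -
  have "(a b * y $ b)\<^sup>2 \<le> (c * y $ b)\<^sup>2" for b
    using assms[of b] by (cases "y $ b = 0") (auto simp: power_mult_distrib intro!: mult_right_mono power_mono)
  then show ?thesis
    by (simp add: power_mult_distrib norm_vec_power2 sum_distrib_left sum_mono)
qed

text \<open>The two halves of the Courant--Fischer characterisation: \<open>s k\<close> is the largest \<open>t\<close> such that
  \<open>t * norm x \<le> norm (X *v x)\<close> on some subspace of dimension greater than \<open>k\<close>.\<close>

lemma svd_values_subspace_attained:
  fixes X :: "real^'n^'m"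
  assumes sv: "svd_values X s" and k: "k < CARD('n)"
  obtains S where "subspace S" "k < dim S" "\<And>x. x \<in> S \<Longrightarrow> s k * norm x \<le> norm (X *v x)"
proof -
  obtain V :: "real^'n^'n" and idx where V: "orthogonal_matrix V"
    and idx: "bij_betw idx UNIV {..<CARD('n)}"
    and expand: "\<And>y. (norm (X *v (V *v y)))\<^sup>2 = (\<Sum>b\<in>UNIV. (s (idx b) * y $ b)\<^sup>2)"
    using svd_values_norm_expansion[OF sv] by blast
  define d where "d = idx -` {..k}"
  define S where "S = (*v) V ` {y. \<forall>b. b \<notin> d \<longrightarrow> y $ b = 0}"
  have "card d = Suc k"
    using idx k unfolding d_def bij_betw_def by (subst card_vimage_inj) auto
  then have "k < dim S"
    using dim_image_coordinate_subspace[OF V] by (simp add: S_def)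
  moreover have "s k * norm x \<le> norm (X *v x)" if "x \<in> S" for x
  proof -
    obtain y where y: "\<And>b. b \<notin> d \<Longrightarrow> y $ b = 0" and x: "x = V *v y"
      using \<open>x \<in> S\<close> by (auto simp: S_def)
    have "0 \<le> s k \<and> s k \<le> s (idx b)" if "y $ b \<noteq> 0" for b
    proof -
      have "idx b \<le> k"
        using y[of b] that by (auto simp: d_def)
      then show ?thesis
        using k svd_values_nonneg[OF sv] svd_values_antimono[OF sv] by blast
    qed
    then have "(s k * norm y)\<^sup>2 \<le> (\<Sum>b\<in>UNIV. (s (idx b) * y $ b)\<^sup>2)"
      by (rule norm_le_weighted_coords)
    then show ?thesis
      by (simp add: x expand norm_orthogonal_matrix_vector_mult[OF V] power2_le_imp_le)
  qed
  ultimately show ?thesis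
    using that subspace_image_coordinate_subspace S_def by blast
qed

lemma svd_values_subspace_bound:
  fixes X :: "real^'n^'m"
  assumes sv: "svd_values X s" and k: "k < CARD('n)"
    and S: "subspace S" "k < dim S" and t: "\<And>x. x \<in> S \<Longrightarrow> t * norm x \<le> norm (X *v x)"
  shows "t \<le> s k"
proof -
  obtain V :: "real^'n^'n" and idx where V: "orthogonal_matrix V"
    and idx: "bij_betw idx UNIV {..<CARD('n)}"
    and expand: "\<And>y. (norm (X *v (V *v y)))\<^sup>2 = (\<Sum>b\<in>UNIV. (s (idx b) * y $ b)\<^sup>2)"
    using svd_values_norm_expansion[OF sv] by blast
  define d where "d = idx -` {k..<CARD('n)}"
  define W where "W = (*v) V ` {y. \<forall>b. b \<notin> d \<longrightarrow> y $ b = 0}"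
  have "card d = CARD('n) - k"
    using idx unfolding d_def bij_betw_def by (subst card_vimage_inj) auto
  then have "dim W = CARD('n) - k"
    using dim_image_coordinate_subspace[OF V] by (simp add: W_def)
  moreover have "dim {x + y |x y. x \<in> S \<and> y \<in> W} + dim (S \<inter> W) = dim S + dim W"
    unfolding W_def by (rule dim_sums_Int[OF S(1) subspace_image_coordinate_subspace])
  moreover have "dim {x + y |x y. x \<in> S \<and> y \<in> W} \<le> CARD('n)"
    using dim_subset_UNIV[of "{x + y |x y. x \<in> S \<and> y \<in> W}"] by simp
  ultimately have "dim (S \<inter> W) \<noteq> 0"
    using S(2) k by linarith
  then obtain x where "x \<in> S" "x \<in> W" "x \<noteq> 0"
    by (auto simp: dim_eq_0)
  then obtain y where y: "\<And>b. b \<notin> d \<Longrightarrow> y $ b = 0" and x: "x = V *v y"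
    by (auto simp: W_def)
  have "0 \<le> s (idx b) \<and> s (idx b) \<le> s k" if "y $ b \<noteq> 0" for b
  proof -
    have "k \<le> idx b" "idx b < CARD('n)"
      using y[of b] that idx by (auto simp: d_def bij_betw_def)
    then show ?thesis
      using svd_values_nonneg[OF sv] svd_values_antimono[OF sv] by blast
  qed
  then have "(\<Sum>b\<in>UNIV. (s (idx b) * y $ b)\<^sup>2) \<le> (s k * norm y)\<^sup>2"
    by (rule weighted_coords_le_norm)
  then have "(norm (X *v x))\<^sup>2 \<le> (s k * norm x)\<^sup>2"
    by (simp add: x expand norm_orthogonal_matrix_vector_mult[OF V])
  then have "norm (X *v x) \<le> s k * norm x"
    by (rule power2_le_imp_le) (simp add: svd_values_nonneg[OF sv])
  then have "t * norm x \<le> s k * norm x"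
    using t[OF \<open>x \<in> S\<close>] by linarith
  then show ?thesis
    using \<open>x \<noteq> 0\<close> by simp
qed

lemma svd_values_unique:
  fixes X :: "real^'n^'m"
  assumes "svd_values X s" "svd_values X s'"
  shows "s = s'"
proof
  fix i
  show "s i = s' i"
  proof (cases "i < CARD('n)")
    case True
    have le: "s i \<le> s' i" if sv: "svd_values X s" and sv': "svd_values X s'" for s s'
    proof -
      obtain S where "subspace S" "i < dim S" "\<And>x. x \<in> S \<Longrightarrow> s i * norm x \<le> norm (X *v x)"
        using svd_values_subspace_attained[OF sv True] by blast
      then show ?thesis
        by (rule svd_values_subspace_bound[OF sv' True])
    qed
    show ?thesis
      using le[OF assms] le[OF assms(2,1)] by simp
  next
    case False
    then show ?thesis
      using assms by (simp add: svd_values_eq_0)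
  qed
qed

lemma svd_values_sing_val:
  fixes X :: "real^'n^'m"
  assumes "CARD('n) \<le> CARD('m)"
  shows "svd_values X (sing_val X)"
proof -
  obtain s where s: "svd_values X s"
    using svd_values_exist[OF assms] .
  show ?thesis
    unfolding sing_val_def by (rule theI[of "svd_values X" s]) (use s svd_values_unique in blast)+
qed

lemma sing_val_nonneg:
  fixes X :: "real^'n^'m"
  assumes "CARD('n) \<le> CARD('m)"
  shows "0 \<le> sing_val X i"
  using svd_values_nonneg[OF svd_values_sing_val[OF assms]] .

lemma norm_matrix_vector_mult_le:
  fixes A :: "real^'n^'m"
  shows "norm (A *v x) \<le> norm A * norm x"
proof -
  have "(norm (A *v x))\<^sup>2 = (\<Sum>i\<in>UNIV. (A $ i \<bullet> x)\<^sup>2)"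
    unfolding norm_vec_power2 by (simp add: matrix_vector_mult_def inner_vec_def)
  also have "\<dots> \<le> (\<Sum>i\<in>UNIV. (norm (A $ i))\<^sup>2 * (norm x)\<^sup>2)"
  proof (rule sum_mono)
    fix i
    have "\<bar>A $ i \<bullet> x\<bar>\<^sup>2 \<le> (norm (A $ i) * norm x)\<^sup>2"
      by (rule power_mono[OF Cauchy_Schwarz_ineq2]) simp
    then show "(A $ i \<bullet> x)\<^sup>2 \<le> (norm (A $ i))\<^sup>2 * (norm x)\<^sup>2"
      by (simp add: power_mult_distrib)
  qed
  also have "\<dots> = (norm A * norm x)\<^sup>2"
    unfolding power_mult_distrib sum_distrib_right[symmetric] power2_norm_eq_inner[of A]
    by (simp add: inner_vec_def power2_norm_eq_inner)
  finally show ?thesis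
    by (rule power2_le_imp_le) simp
qed

text \<open>Weyl's inequality: on a subspace where \<open>X\<close> stretches by at least \<open>sing_val X i\<close>, \<open>Y\<close> stretches
  by at least \<open>sing_val X i - norm (X - Y)\<close>.\<close>
lemma sing_val_lipschitz:
  fixes X Y :: "real^'n^'m"
  assumes mn: "CARD('n) \<le> CARD('m)"
  shows "\<bar>sing_val X i - sing_val Y i\<bar> \<le> norm (X - Y)"
proof -
  have "sing_val X i - norm (X - Y) \<le> sing_val Y i" for X Y :: "real^'n^'m"
  proof (cases "i < CARD('n)")
    case True
    obtain S where S: "subspace S" "i < dim S" "\<And>x. x \<in> S \<Longrightarrow> sing_val X i * norm x \<le> norm (X *v x)"
      using svd_values_subspace_attained[OF svd_values_sing_val[OF mn] True] by blast
    have "(sing_val X i - norm (X - Y)) * norm x \<le> norm (Y *v x)" if "x \<in> S" for x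
    proof -
      have "X *v x = Y *v x + (X - Y) *v x"
        by (simp add: matrix_vector_mult_diff_rdistrib)
      then have "norm (X *v x) \<le> norm (Y *v x) + norm ((X - Y) *v x)"
        by (metis norm_triangle_ineq)
      then show ?thesis
        using S(3)[OF that] norm_matrix_vector_mult_le[of "X - Y" x] by (simp add: left_diff_distrib)
    qed
    then show ?thesis
      using svd_values_subspace_bound[OF svd_values_sing_val[OF mn] True S(1,2)] by blast
  next
    case False
    then show ?thesis
      using svd_values_eq_0[OF svd_values_sing_val[OF mn]] by simp
  qed
  from this[of X Y] this[of Y X] show ?thesis
    by (simp add: norm_minus_commute abs_le_iff)
qed

section \<open>Smooth functions and regular subgradients\<close>

lemma powr_le_tangent:
  fixes a b p :: real
  assumes "0 < a" "0 < b" "0 < p" "p < 1"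
  shows "b powr p \<le> a powr p + p / a powr (1 - p) * (b - a)"
proof -
  have "b powr p * a powr (1 - p) \<le> p * b + (1 - p) * a"
    using Youngs_inequality_0[of p "1 - p" b a] assms by simp
  moreover have "a powr p * a powr (1 - p) = a"
    using assms(1) by (simp flip: powr_add)
  moreover have "a powr (1 - p) > 0"
    using assms(1) by simp
  ultimately show ?thesis
    by (simp add: field_simps)
qed

lemma lipschitz_gradient_upper_bound:
  fixes f :: "'a::real_inner \<Rightarrow> real"
  assumes grad: "\<And>X. (f has_derivative (\<lambda>H. gradf X \<bullet> H)) (at X)"
    and lip: "\<And>X Y. norm (gradf X - gradf Y) \<le> L * norm (X - Y)"
  shows "f (X + D) \<le> f X + gradf X \<bullet> D + L / 2 * (norm D)\<^sup>2"
proof -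
  define \<phi> where "\<phi> \<tau> = f (X + \<tau> *\<^sub>R D) - \<tau> * (gradf X \<bullet> D) - L / 2 * \<tau>\<^sup>2 * (norm D)\<^sup>2" for \<tau>
  have line: "((\<lambda>\<tau>. f (X + \<tau> *\<^sub>R D)) has_real_derivative gradf (X + \<tau> *\<^sub>R D) \<bullet> D) (at \<tau>)" for \<tau>
  proof -
    have "((\<lambda>\<tau>. X + \<tau> *\<^sub>R D) has_derivative (\<lambda>h. h *\<^sub>R D)) (at \<tau>)"
      by (auto intro!: derivative_eq_intros)
    from diff_chain_at[OF this grad] show ?thesis
      by (auto intro: has_derivative_imp_has_field_derivative simp: o_def mult.commute)
  qed
  have "\<phi> 1 \<le> \<phi> 0"
  proof (rule DERIV_nonpos_imp_nonincreasing[of 0 1])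
    fix \<tau> :: real
    assume \<tau>: "0 \<le> \<tau>" "\<tau> \<le> 1"
    have "(\<phi> has_real_derivative (gradf (X + \<tau> *\<^sub>R D) - gradf X) \<bullet> D - L * \<tau> * (norm D)\<^sup>2) (at \<tau>)"
      unfolding \<phi>_def by (rule derivative_eq_intros line | simp add: inner_diff_left)+
    moreover have "(gradf (X + \<tau> *\<^sub>R D) - gradf X) \<bullet> D \<le> L * \<tau> * (norm D)\<^sup>2"
    proof -
      have "(gradf (X + \<tau> *\<^sub>R D) - gradf X) \<bullet> D \<le> norm (gradf (X + \<tau> *\<^sub>R D) - gradf X) * norm D"
        by (rule norm_cauchy_schwarz)
      also have "\<dots> \<le> L * norm (\<tau> *\<^sub>R D) * norm D"
        using lip[of "X + \<tau> *\<^sub>R D" X] by (intro mult_right_mono) auto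
      finally show ?thesis
        using \<tau> by (simp add: power2_eq_square mult.assoc)
    qed
    ultimately show "\<exists>y. (\<phi> has_real_derivative y) (at \<tau>) \<and> y \<le> 0"
      by auto
  qed simp
  then show ?thesis
    by (simp add: \<phi>_def)
qed

lemma lipschitz_gradient_lower_bound:
  fixes f :: "'a::real_inner \<Rightarrow> real"
  assumes grad: "\<And>X. (f has_derivative (\<lambda>H. gradf X \<bullet> H)) (at X)"
    and lip: "\<And>X Y. norm (gradf X - gradf Y) \<le> L * norm (X - Y)"
  shows "f X + gradf X \<bullet> D - L / 2 * (norm D)\<^sup>2 \<le> f (X + D)"
proof -
  have "- f (X + D) \<le> - f X + (- gradf X) \<bullet> D + L / 2 * (norm D)\<^sup>2"
  proof (rule lipschitz_gradient_upper_bound)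
    show "((\<lambda>x. - f x) has_derivative (\<lambda>H. - gradf X \<bullet> H)) (at X)" for X
      using grad by (auto intro!: derivative_eq_intros)
    show "norm (- gradf X - - gradf Y) \<le> L * norm (X - Y)" for X Y
      using lip[of Y X] by (simp add: norm_minus_commute)
  qed
  then show ?thesis
    by simp
qed

lemma bounded_range_if_coercive:
  fixes f :: "'a::real_normed_vector \<Rightarrow> real"
  assumes "filterlim f at_top at_infinity" "\<And>t. f (Xs t) \<le> c"
  shows "bounded (range Xs)"
proof -
  obtain R where "\<And>X. R \<le> norm X \<Longrightarrow> c + 1 \<le> f X"
    using assms(1) unfolding filterlim_at_top eventually_at_infinity by blast
  then have "norm (Xs t) < R" for t
    using assms(2)[of t] by (meson add_le_same_cancel1 not_le not_one_le_zero order_trans)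
  then show ?thesis
    by (auto simp: bounded_iff intro: less_imp_le)
qed

lemma zero_in_regular_subdiffI:
  fixes F :: "'a::real_inner \<Rightarrow> real"
  assumes "(g \<longlongrightarrow> 0) (at 0)" and "\<And>z. z \<noteq> 0 \<Longrightarrow> g z \<le> (F (x + z) - F x) / norm z"
  shows "0 \<in> regular_subdiff F x"
  unfolding regular_subdiff_def mem_Collect_eq le_Liminf_iff
proof (intro allI impI)
  fix y :: ereal
  assume "y < 0"
  have "((\<lambda>z. ereal (g z)) \<longlongrightarrow> 0) (at 0)"
    using tendsto_ereal[OF assms(1)] by (simp add: zero_ereal_def)
  then have "\<forall>\<^sub>F z in at 0. y < ereal (g z)"
    using \<open>y < 0\<close> order_tendstoD(1) by blast
  then show "\<forall>\<^sub>F z in at 0. y < ereal ((F (x + z) - F x - 0 \<bullet> z) / norm z)"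
    using eventually_neq_at_within[of 0 0 UNIV]
    by eventually_elim (use assms(2) in \<open>auto intro: less_le_trans\<close>)
qed

lemma crit_if_zero_in_regular_subdiff: "0 \<in> regular_subdiff F x \<Longrightarrow> x \<in> crit F"
  unfolding crit_def limiting_subdiff_def by force

section \<open>Limit sets of sequences\<close>

lemma mem_limit_set_iff:
  fixes Xs :: "nat \<Rightarrow> 'a::metric_space"
  shows "x \<in> limit_set Xs \<longleftrightarrow> (\<forall>e>0. \<forall>N. \<exists>t\<ge>N. dist (Xs t) x < e)"
proof
  assume "x \<in> limit_set Xs"
  then obtain r where r: "strict_mono r" "(Xs \<circ> r) \<longlonglongrightarrow> x"
    by (auto simp: limit_set_def)
  show "\<forall>e>0. \<forall>N. \<exists>t\<ge>N. dist (Xs t) x < e"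
  proof (intro allI impI)
    fix e :: real and N
    assume "e > 0"
    then obtain K where K: "\<And>k. k \<ge> K \<Longrightarrow> dist (Xs (r k)) x < e"
      using r(2) unfolding lim_sequentially by auto
    have "N \<le> r (max K N)"
      using seq_suble[OF r(1), of "max K N"] by simp
    then show "\<exists>t\<ge>N. dist (Xs t) x < e"
      using K[of "max K N"] by auto
  qed
next
  assume near: "\<forall>e>0. \<forall>N. \<exists>t\<ge>N. dist (Xs t) x < e"
  have "\<exists>r. \<forall>k. dist (Xs (r k)) x < inverse (Suc k) \<and> r k < r (Suc k)"
  proof (rule dependent_nat_choice)
    show "\<exists>t. dist (Xs t) x < inverse (Suc 0)"
      using near[rule_format, of 1 0] by auto
    show "\<exists>t'. dist (Xs t') x < inverse (Suc (Suc k)) \<and> t < t'" for t k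
      using near[rule_format, of "inverse (Suc (Suc k))" "Suc t"] by auto
  qed
  then obtain r where r: "\<And>k. dist (Xs (r k)) x < inverse (Suc k)" "strict_mono r"
    by (auto simp: strict_mono_Suc_iff)
  have "(\<lambda>k. dist ((Xs \<circ> r) k) x) \<longlonglongrightarrow> 0"
  proof (rule tendsto_sandwich[OF _ _ tendsto_const LIMSEQ_inverse_real_of_nat])
    show "\<forall>\<^sub>F k in sequentially. dist ((Xs \<circ> r) k) x \<le> inverse (real (Suc k))"
      using r(1) by (intro always_eventually allI) (simp add: less_imp_le)
  qed simp
  then have "(Xs \<circ> r) \<longlonglongrightarrow> x"
    by (rule tendsto_dist_iff[THEN iffD2])
  with r(2) show "x \<in> limit_set Xs"
    unfolding limit_set_def by blast
qed

lemma closed_limit_set: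
  fixes Xs :: "nat \<Rightarrow> 'a::metric_space"
  shows "closed (limit_set Xs)"
proof -
  have "x \<in> limit_set Xs" if "x \<in> closure (limit_set Xs)" for x
    unfolding mem_limit_set_iff
  proof (intro allI impI)
    fix e :: real and N
    assume "e > 0"
    then obtain y where y: "y \<in> limit_set Xs" "dist y x < e / 2"
      using \<open>x \<in> closure (limit_set Xs)\<close> by (meson closure_approachable half_gt_zero)
    then obtain t where "t \<ge> N" "dist (Xs t) y < e / 2"
      using \<open>e > 0\<close> unfolding mem_limit_set_iff by (meson half_gt_zero)
    then show "\<exists>t\<ge>N. dist (Xs t) x < e"
      using y(2) dist_triangle[of "Xs t" x y] by (intro exI[of _ t]) auto
  qed
  then show ?thesis
    using closure_subset_eq by blast
qed

lemma limit_point_of_subsequence: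
  fixes Xs :: "nat \<Rightarrow> 'a::heine_borel" and r :: "nat \<Rightarrow> nat"
  assumes "bounded (range Xs)" and "strict_mono r"
  obtains x r' where "x \<in> limit_set Xs" "strict_mono r'" "(Xs \<circ> (r \<circ> r')) \<longlonglongrightarrow> x"
proof -
  have "bounded (range (Xs \<circ> r))"
    using assms(1) by (rule bounded_subset) auto
  then obtain x and r' :: "nat \<Rightarrow> nat" where r': "strict_mono r'" "(Xs \<circ> (r \<circ> r')) \<longlonglongrightarrow> x"
    using bounded_imp_convergent_subsequence by (metis o_assoc)
  moreover have "x \<in> limit_set Xs"
    unfolding limit_set_def using strict_mono_o[OF assms(2) r'(1)] r'(2) by blast
  ultimately show ?thesis
    using that by blast
qed

lemma limit_set_nonempty:
  fixes Xs :: "nat \<Rightarrow> 'a::heine_borel"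
  assumes "bounded (range Xs)"
  shows "limit_set Xs \<noteq> {}"
  using limit_point_of_subsequence[OF assms strict_mono_id] by blast

lemma compact_limit_set:
  fixes Xs :: "nat \<Rightarrow> 'a::heine_borel"
  assumes "bounded (range Xs)"
  shows "compact (limit_set Xs)"
proof -
  have "limit_set Xs \<subseteq> closure (range Xs)"
  proof
    fix x
    assume "x \<in> limit_set Xs"
    then obtain r where "(Xs \<circ> r) \<longlonglongrightarrow> x"
      by (auto simp: limit_set_def)
    then show "x \<in> closure (range Xs)"
      unfolding closure_sequential by (intro exI[of _ "Xs \<circ> r"]) auto
  qed
  then have "bounded (limit_set Xs)"
    using assms bounded_closure bounded_subset by blast
  then show ?thesis
    using closed_limit_set by (auto simp: compact_eq_bounded_closed)
qed

lemma infdist_limit_set_tendsto_0: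
  fixes Xs :: "nat \<Rightarrow> 'a::heine_borel"
  assumes "bounded (range Xs)"
  shows "(\<lambda>t. infdist (Xs t) (limit_set Xs)) \<longlonglongrightarrow> 0"
proof (rule ccontr)
  assume "\<not> ?thesis"
  then obtain e where "e > 0" and "\<forall>N. \<exists>t\<ge>N. e \<le> infdist (Xs t) (limit_set Xs)"
    unfolding LIMSEQ_iff by (auto simp: not_less abs_of_nonneg[OF infdist_nonneg])
  then have "infinite {t. e \<le> infdist (Xs t) (limit_set Xs)}"
    by (simp add: infinite_nat_iff_unbounded_le)
  then obtain r :: "nat \<Rightarrow> nat" where r: "strict_mono r" "\<And>k. e \<le> infdist (Xs (r k)) (limit_set Xs)"
    using infinite_enumerate by blast
  obtain x r' where x: "x \<in> limit_set Xs" and "(Xs \<circ> (r \<circ> r')) \<longlonglongrightarrow> x"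
    using limit_point_of_subsequence[OF assms r(1)] by blast
  then obtain k where "dist (Xs (r (r' k))) x < e"
    using \<open>e > 0\<close> unfolding lim_sequentially by auto
  moreover have "infdist (Xs (r (r' k))) (limit_set Xs) \<le> dist (Xs (r (r' k))) x"
    using x by (rule infdist_le)
  ultimately show False
    using r(2)[of "r' k"] by linarith
qed

lemma eventually_close_to_limit_set:
  fixes Xs :: "nat \<Rightarrow> 'a::heine_borel"
  assumes "bounded (range Xs)" and "e > 0"
  shows "\<forall>\<^sub>F t in sequentially. \<exists>y\<in>limit_set Xs. dist (Xs t) y < e"
  using order_tendstoD(2)[OF infdist_limit_set_tendsto_0[OF assms(1)] assms(2)]
proof eventually_elim
  case (elim t)
  obtain y where "y \<in> limit_set Xs" "infdist (Xs t) (limit_set Xs) = dist (Xs t) y"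
    using infdist_attains_inf[OF closed_limit_set limit_set_nonempty[OF assms(1)]] by blast
  with elim show ?case
    by auto
qed

lemma stays_near_separated_part:
  fixes Xs :: "nat \<Rightarrow> 'a::metric_space"
  assumes gap: "\<And>a b. a \<in> A \<Longrightarrow> b \<in> B \<Longrightarrow> d \<le> dist a b"
    and close: "\<And>t. t \<ge> N \<Longrightarrow> (\<exists>y\<in>A \<union> B. dist (Xs t) y < d / 3) \<and> dist (Xs (Suc t)) (Xs t) < d / 3"
    and start: "t0 \<ge> N" "\<exists>a\<in>A. dist (Xs t0) a < d / 3"
  shows "t \<ge> t0 \<Longrightarrow> \<exists>a\<in>A. dist (Xs t) a < d / 3"
proof (induction t rule: dec_induct)
  case base
  show ?case
    by (fact start(2))
next
  case (step t)
  then obtain a where a: "a \<in> A" "dist (Xs t) a < d / 3"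
    by blast
  have "N \<le> t" "N \<le> Suc t"
    using step.hyps start(1) by simp_all
  then obtain y where y: "y \<in> A \<union> B" "dist (Xs (Suc t)) y < d / 3"
    and step_short: "dist (Xs (Suc t)) (Xs t) < d / 3"
    using close by blast
  have "dist a y \<le> dist (Xs t) a + dist (Xs t) y"
    by (rule dist_triangle3)
  moreover have "dist (Xs t) y \<le> dist (Xs (Suc t)) (Xs t) + dist (Xs (Suc t)) y"
    by (metis dist_commute dist_triangle)
  ultimately have "dist a y < d"
    using a(2) y(2) step_short by linarith
  have "y \<in> A"
  proof (rule ccontr)
    assume "y \<notin> A"
    then have "d \<le> dist a y"
      using y(1) gap[OF a(1)] by blast
    with \<open>dist a y < d\<close> show False
      by linarith
  qed
  with y(2) show ?case
    by blast
qed

lemma connected_limit_set: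
  fixes Xs :: "nat \<Rightarrow> 'a::heine_borel"
  assumes bounded: "bounded (range Xs)" and steps: "(\<lambda>t. dist (Xs (Suc t)) (Xs t)) \<longlonglongrightarrow> 0"
  shows "connected (limit_set Xs)"
proof (rule ccontr)
  let ?L = "limit_set Xs"
  assume "\<not> connected ?L"
  then obtain A B where AB: "closed A" "closed B" "?L \<subseteq> A \<union> B" "A \<inter> B \<inter> ?L = {}"
    "A \<inter> ?L \<noteq> {}" "B \<inter> ?L \<noteq> {}"
    unfolding connected_closed by blast
  have "compact (A \<inter> ?L)"
    using compact_Int_closed[OF compact_limit_set[OF bounded] AB(1)] by (simp add: Int_commute)
  moreover have "closed (B \<inter> ?L)"
    using AB(2) closed_limit_set by (rule closed_Int)
  moreover have "(A \<inter> ?L) \<inter> (B \<inter> ?L) = {}"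
    using AB(4) by blast
  ultimately have "\<exists>d>0. \<forall>a\<in>A \<inter> ?L. \<forall>b\<in>B \<inter> ?L. d \<le> dist a b"
    by (rule separate_compact_closed)
  then obtain d where "d > 0" and gap: "\<And>a b. a \<in> A \<inter> ?L \<Longrightarrow> b \<in> B \<inter> ?L \<Longrightarrow> d \<le> dist a b"
    by blast
  then have "d / 3 > 0"
    by simp
  have "\<forall>\<^sub>F t in sequentially. (\<exists>y\<in>?L. dist (Xs t) y < d / 3) \<and> dist (Xs (Suc t)) (Xs t) < d / 3"
    using eventually_close_to_limit_set[OF bounded \<open>d / 3 > 0\<close>] order_tendstoD(2)[OF steps \<open>d / 3 > 0\<close>]
    by (rule eventually_conj)
  then obtain N where N: "\<And>t. t \<ge> N \<Longrightarrow> (\<exists>y\<in>?L. dist (Xs t) y < d / 3) \<and> dist (Xs (Suc t)) (Xs t) < d / 3"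
    unfolding eventually_sequentially by blast
  have close: "(\<exists>y\<in>(A \<inter> ?L) \<union> (B \<inter> ?L). dist (Xs t) y < d / 3) \<and> dist (Xs (Suc t)) (Xs t) < d / 3"
    if "t \<ge> N" for t
    using N[OF that] AB(3) by auto
  have visits: "\<exists>t\<ge>M. dist (Xs t) y < d / 3" if "y \<in> ?L" for y M
    using that[unfolded mem_limit_set_iff, rule_format, OF \<open>d / 3 > 0\<close>] .
  obtain a b where a: "a \<in> A \<inter> ?L" and b: "b \<in> B \<inter> ?L"
    using AB(5,6) by blast
  then obtain t0 where t0: "t0 \<ge> N" "dist (Xs t0) a < d / 3"
    using visits by blast
  obtain t1 where t1: "t1 \<ge> t0" "dist (Xs t1) b < d / 3"
    using visits b by blast
  then obtain a' where a': "a' \<in> A \<inter> ?L" "dist (Xs t1) a' < d / 3"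
    using stays_near_separated_part[where A = "A \<inter> ?L" and B = "B \<inter> ?L" and Xs = Xs and d = d,
        OF gap close t0(1)] t0 a
    by blast
  then show False
    using gap[OF a'(1) b] t1(2) dist_triangle3[of a' b "Xs t1"] \<open>d > 0\<close> by linarith
qed

lemma limit_set_level:
  fixes F :: "'a::t2_space \<Rightarrow> 'b::t2_space"
  assumes "isCont F x" "(\<lambda>t. F (Xs t)) \<longlonglongrightarrow> c" "x \<in> limit_set Xs"
  shows "F x = c"
proof -
  obtain r where r: "strict_mono r" "(\<lambda>k. Xs (r k)) \<longlonglongrightarrow> x"
    using assms(3) unfolding limit_set_def o_def by blast
  have "(\<lambda>k. F (Xs (r k))) \<longlonglongrightarrow> F x"
    using isCont_tendsto_compose[OF assms(1) r(2)] .
  moreover have "(\<lambda>k. F (Xs (r k))) \<longlonglongrightarrow> c"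
    using LIMSEQ_subseq_LIMSEQ[OF assms(2) r(1)] by (simp add: o_def)
  ultimately show ?thesis
    by (rule LIMSEQ_unique)
qed

section \<open>Iteratively reweighted proximal gradient steps\<close>

text \<open>\<open>\<sigma> i\<close> abstracts the \<open>i\<close>-th singular value, \<open>h\<close> the concave penalty \<open>a \<mapsto> (a + \<epsilon>) powr p\<close> and
  \<open>w\<close> its derivative, the reweighting. \<open>model X\<close> is the subproblem of the step taken from \<open>X\<close>.\<close>
locale reweighted_prox_grad =
  fixes f :: "'a::euclidean_space \<Rightarrow> real" and gradf :: "'a \<Rightarrow> 'a" and L \<mu> :: real
    and \<sigma> :: "nat \<Rightarrow> 'a \<Rightarrow> real" and n :: nat and h w :: "real \<Rightarrow> real"
  assumes gradient: "\<And>X. (f has_derivative (\<lambda>H. gradf X \<bullet> H)) (at X)"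
    and gradient_lipschitz: "\<And>X Y. norm (gradf X - gradf Y) \<le> L * norm (X - Y)"
    and step_size: "0 < \<mu>" "\<mu> * L < 1"
    and sigma_nonneg: "\<And>i X. 0 \<le> \<sigma> i X"
    and sigma_lipschitz: "\<And>i X Y. \<bar>\<sigma> i X - \<sigma> i Y\<bar> \<le> norm (X - Y)"
    and tangent: "\<And>a b. 0 \<le> a \<Longrightarrow> 0 \<le> b \<Longrightarrow> h b \<le> h a + w a * (b - a)"
    and h_continuous: "\<And>a. 0 \<le> a \<Longrightarrow> isCont h a"
    and w_continuous: "\<And>a. 0 \<le> a \<Longrightarrow> isCont w a"
begin

definition objective :: "'a \<Rightarrow> real" where
  "objective X = f X + (\<Sum>i<n. h (\<sigma> i X))"

definition model :: "'a \<Rightarrow> 'a \<Rightarrow> real" where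
  "model X Y = 1/2 * (norm (Y - (X - \<mu> *\<^sub>R gradf X)))\<^sup>2 + \<mu> * (\<Sum>i<n. w (\<sigma> i X) * \<sigma> i Y)"

lemma model_increment:
  "model X Y - model X X
    = (norm (Y - X))\<^sup>2 / 2 + \<mu> * (gradf X \<bullet> (Y - X) + (\<Sum>i<n. w (\<sigma> i X) * (\<sigma> i Y - \<sigma> i X)))"
proof -
  have "(norm (Y - (X - \<mu> *\<^sub>R gradf X)))\<^sup>2
      = (norm (Y - X))\<^sup>2 + 2 * \<mu> * (gradf X \<bullet> (Y - X)) + (norm (\<mu> *\<^sub>R gradf X))\<^sup>2"
    unfolding power2_norm_eq_inner
    by (simp add: inner_diff_left inner_diff_right inner_commute algebra_simps)
  then show ?thesis
    by (simp add: model_def sum_subtractf right_diff_distrib algebra_simps)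
qed

lemma objective_le_majorant:
  "objective Y \<le> objective X + gradf X \<bullet> (Y - X) + L / 2 * (norm (Y - X))\<^sup>2
    + (\<Sum>i<n. w (\<sigma> i X) * (\<sigma> i Y - \<sigma> i X))"
proof -
  have "f Y \<le> f X + gradf X \<bullet> (Y - X) + L / 2 * (norm (Y - X))\<^sup>2"
    using lipschitz_gradient_upper_bound[OF gradient gradient_lipschitz, of X "Y - X"] by simp
  moreover have "(\<Sum>i<n. h (\<sigma> i Y)) \<le> (\<Sum>i<n. h (\<sigma> i X) + w (\<sigma> i X) * (\<sigma> i Y - \<sigma> i X))"
    by (intro sum_mono tangent sigma_nonneg)
  ultimately show ?thesis
    by (simp add: objective_def sum.distrib)
qed

lemma objective_ge_minorant:
  "objective X + gradf X \<bullet> (Y - X) - L / 2 * (norm (Y - X))\<^sup>2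
    + (\<Sum>i<n. w (\<sigma> i X) * (\<sigma> i Y - \<sigma> i X))
    - (\<Sum>i<n. \<bar>w (\<sigma> i Y) - w (\<sigma> i X)\<bar>) * norm (Y - X) \<le> objective Y"
proof -
  have "f X + gradf X \<bullet> (Y - X) - L / 2 * (norm (Y - X))\<^sup>2 \<le> f Y"
    using lipschitz_gradient_lower_bound[OF gradient gradient_lipschitz, of X "Y - X"] by simp
  moreover have "w (\<sigma> i X) * (\<sigma> i Y - \<sigma> i X) - \<bar>w (\<sigma> i Y) - w (\<sigma> i X)\<bar> * norm (Y - X)
      \<le> h (\<sigma> i Y) - h (\<sigma> i X)" for i
  proof -
    have "\<bar>(w (\<sigma> i Y) - w (\<sigma> i X)) * (\<sigma> i Y - \<sigma> i X)\<bar> \<le> \<bar>w (\<sigma> i Y) - w (\<sigma> i X)\<bar> * norm (Y - X)"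
      using sigma_lipschitz[of i Y X] by (simp add: abs_mult mult_left_mono)
    moreover have "h (\<sigma> i X) \<le> h (\<sigma> i Y) + w (\<sigma> i Y) * (\<sigma> i X - \<sigma> i Y)"
      by (intro tangent sigma_nonneg)
    ultimately show ?thesis
      by (simp add: algebra_simps abs_le_iff)
  qed
  then have "(\<Sum>i<n. w (\<sigma> i X) * (\<sigma> i Y - \<sigma> i X)) - (\<Sum>i<n. \<bar>w (\<sigma> i Y) - w (\<sigma> i X)\<bar>) * norm (Y - X)
      \<le> (\<Sum>i<n. h (\<sigma> i Y)) - (\<Sum>i<n. h (\<sigma> i X))"
    by (simp add: sum_distrib_right flip: sum_subtractf) (rule sum_mono)
  ultimately show ?thesis
    by (simp add: objective_def)
qed

lemma descent_constant_pos: "(1 / \<mu> - L) / 2 > 0"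
  using step_size by (simp add: field_simps)

lemma objective_descent:
  "objective Y + (1 / \<mu> - L) / 2 * (norm (Y - X))\<^sup>2 \<le> objective X + (model X Y - model X X) / \<mu>"
proof -
  have "(model X Y - model X X) / \<mu>
      = (norm (Y - X))\<^sup>2 / (2 * \<mu>) + gradf X \<bullet> (Y - X) + (\<Sum>i<n. w (\<sigma> i X) * (\<sigma> i Y - \<sigma> i X))"
    using step_size(1) by (simp add: model_increment field_simps)
  moreover have "(1 / \<mu> - L) / 2 * (norm (Y - X))\<^sup>2 = (norm (Y - X))\<^sup>2 / (2 * \<mu>) - L / 2 * (norm (Y - X))\<^sup>2"
    by (simp add: field_simps)
  ultimately show ?thesis
    using objective_le_majorant[of Y X] by linarith
qed

lemma tendsto_sigma:
  assumes "(A \<longlongrightarrow> X) net"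
  shows "((\<lambda>k. \<sigma> i (A k)) \<longlongrightarrow> \<sigma> i X) net"
proof (rule Lim_null_comparison[THEN LIM_zero_cancel])
  show "\<forall>\<^sub>F k in net. norm (\<sigma> i (A k) - \<sigma> i X) \<le> norm (A k - X)"
    by (simp add: sigma_lipschitz)
  show "((\<lambda>k. norm (A k - X)) \<longlongrightarrow> 0) net"
    using tendsto_norm_zero[OF LIM_zero[OF assms]] .
qed

lemma tendsto_gradf:
  assumes "(A \<longlongrightarrow> X) net"
  shows "((\<lambda>k. gradf (A k)) \<longlongrightarrow> gradf X) net"
proof (rule Lim_null_comparison[THEN LIM_zero_cancel])
  show "\<forall>\<^sub>F k in net. norm (gradf (A k) - gradf X) \<le> L * norm (A k - X)"
    by (simp add: gradient_lipschitz)
  show "((\<lambda>k. L * norm (A k - X)) \<longlongrightarrow> 0) net"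
    using tendsto_mult_right_zero[OF tendsto_norm_zero[OF LIM_zero[OF assms]]] .
qed

lemma tendsto_w_sigma: "(A \<longlongrightarrow> X) net \<Longrightarrow> ((\<lambda>k. w (\<sigma> i (A k))) \<longlongrightarrow> w (\<sigma> i X)) net"
  using isCont_tendsto_compose[OF w_continuous[OF sigma_nonneg] tendsto_sigma] .

lemma tendsto_model:
  assumes "(A \<longlongrightarrow> X) net" "(B \<longlongrightarrow> Y) net"
  shows "((\<lambda>k. model (A k) (B k)) \<longlongrightarrow> model X Y) net"
  unfolding model_def
  by (intro tendsto_intros assms tendsto_gradf tendsto_w_sigma tendsto_sigma)

lemma isCont_objective: "isCont objective X"
  unfolding objective_def isCont_def
  using has_derivative_continuous[OF gradient, of X]
  by (intro tendsto_intros isCont_tendsto_compose[OF h_continuous[OF sigma_nonneg]]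
      tendsto_sigma tendsto_ident_at) (simp add: isCont_def)

text \<open>The minorant bounds the difference quotient of the objective from below by a function
  vanishing at \<open>0\<close>.\<close>
lemma zero_in_regular_subdiff_if_fixed_point:
  assumes fixed: "\<And>Y. model X X \<le> model X Y"
  shows "0 \<in> regular_subdiff objective X"
proof (rule zero_in_regular_subdiffI)
  define g where "g z = - (L / 2 + 1 / (2 * \<mu>)) * norm z - (\<Sum>i<n. \<bar>w (\<sigma> i (X + z)) - w (\<sigma> i X)\<bar>)" for z
  have "((\<lambda>z. X + z) \<longlongrightarrow> X) (at 0)"
    by (auto intro!: tendsto_eq_intros)
  then have "(g \<longlongrightarrow> - (L / 2 + 1 / (2 * \<mu>)) * norm (0::'a) - (\<Sum>i<n. \<bar>w (\<sigma> i X) - w (\<sigma> i X)\<bar>)) (at 0)"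
    unfolding g_def by (intro tendsto_intros tendsto_w_sigma)
  then show "(g \<longlongrightarrow> 0) (at 0)"
    by simp
  show "g z \<le> (objective (X + z) - objective X) / norm z" if "z \<noteq> 0" for z
  proof -
    define S where "S = (\<Sum>i<n. w (\<sigma> i X) * (\<sigma> i (X + z) - \<sigma> i X))"
    define Q where "Q = (\<Sum>i<n. \<bar>w (\<sigma> i (X + z)) - w (\<sigma> i X)\<bar>)"
    have "0 \<le> (norm z)\<^sup>2 / 2 + \<mu> * (gradf X \<bullet> z + S)"
      using fixed[of "X + z"] model_increment[of X "X + z"] by (simp add: S_def)
    then have "- (norm z)\<^sup>2 / (2 * \<mu>) \<le> gradf X \<bullet> z + S"
      using step_size(1) by (simp add: field_simps)
    moreover have "objective X + gradf X \<bullet> z - L / 2 * (norm z)\<^sup>2 + S - Q * norm z \<le> objective (X + z)"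
      using objective_ge_minorant[of X "X + z"] by (simp add: S_def Q_def)
    moreover have "norm z * g z = - (L / 2) * (norm z)\<^sup>2 - (norm z)\<^sup>2 / (2 * \<mu>) - Q * norm z"
      by (simp add: g_def Q_def power2_eq_square algebra_simps)
    ultimately have "norm z * g z \<le> objective (X + z) - objective X"
      by linarith
    then show ?thesis
      using that by (simp add: field_simps)
  qed
qed

end

locale reweighted_prox_grad_sequence = reweighted_prox_grad +
  fixes Xs :: "nat \<Rightarrow> 'a"
  assumes step: "\<And>t Y. model (Xs t) (Xs (Suc t)) \<le> model (Xs t) Y"
begin

lemma objective_sufficient_decrease:
  "objective (Xs (Suc t)) + (1 / \<mu> - L) / 2 * (norm (Xs (Suc t) - Xs t))\<^sup>2 \<le> objective (Xs t)"
proof -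
  have "model (Xs t) (Xs (Suc t)) - model (Xs t) (Xs t) \<le> 0"
    using step[of t "Xs t"] by simp
  then show ?thesis
    using objective_descent[of "Xs (Suc t)" "Xs t"] step_size(1)
    by (smt (verit) divide_nonpos_pos)
qed

lemma objective_iterates_decseq: "decseq (\<lambda>t. objective (Xs t))"
  unfolding decseq_Suc_iff
  using objective_sufficient_decrease descent_constant_pos
  by (smt (verit) mult_nonneg_nonneg zero_le_power2)

lemma objective_iterates_le_initial: "objective (Xs t) \<le> objective (Xs 0)"
  using objective_iterates_decseq by (simp add: decseq_def)

lemma objective_iterates_tendsto:
  assumes "bdd_below (range objective)"
  obtains c where "(\<lambda>t. objective (Xs t)) \<longlonglongrightarrow> c"
proof -
  obtain b where "\<And>X. b \<le> objective X"
    using assms by (auto simp: bdd_below_def)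
  then show ?thesis
    using decseq_convergent[OF objective_iterates_decseq] that by blast
qed

lemma steps_tendsto_0:
  assumes "bdd_below (range objective)"
  shows "(\<lambda>t. Xs (Suc t) - Xs t) \<longlonglongrightarrow> 0"
proof -
  define c where "c = (1 / \<mu> - L) / 2"
  have "c > 0"
    using descent_constant_pos by (simp add: c_def)
  obtain v where v: "(\<lambda>t. objective (Xs t)) \<longlonglongrightarrow> v"
    using objective_iterates_tendsto[OF assms] .
  have lim: "(\<lambda>t. (objective (Xs t) - objective (Xs (Suc t))) / c) \<longlonglongrightarrow> 0"
    using tendsto_divide[OF tendsto_diff[OF v LIMSEQ_Suc[OF v]] tendsto_const[of c]] \<open>c > 0\<close> by simp
  have bound: "(norm (Xs (Suc t) - Xs t))\<^sup>2 \<le> (objective (Xs t) - objective (Xs (Suc t))) / c" for t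
  proof -
    have "c * (norm (Xs (Suc t) - Xs t))\<^sup>2 \<le> objective (Xs t) - objective (Xs (Suc t))"
      using objective_sufficient_decrease[of t] unfolding c_def by linarith
    then show ?thesis
      using \<open>c > 0\<close> by (simp add: pos_le_divide_eq mult.commute)
  qed
  have "(\<lambda>t. (norm (Xs (Suc t) - Xs t))\<^sup>2) \<longlonglongrightarrow> 0"
  proof (rule tendsto_sandwich[OF _ _ tendsto_const lim])
    show "\<forall>\<^sub>F t in sequentially. (norm (Xs (Suc t) - Xs t))\<^sup>2 \<le> (objective (Xs t) - objective (Xs (Suc t))) / c"
      using bound by (intro always_eventually allI)
  qed simp
  then have "(\<lambda>t. sqrt ((norm (Xs (Suc t) - Xs t))\<^sup>2)) \<longlonglongrightarrow> sqrt 0"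
    by (rule tendsto_real_sqrt)
  then show ?thesis
    by (simp add: tendsto_norm_zero_iff)
qed

lemma limit_point_fixed_point:
  assumes steps: "(\<lambda>t. Xs (Suc t) - Xs t) \<longlonglongrightarrow> 0" and "X \<in> limit_set Xs"
  shows "model X X \<le> model X Y"
proof -
  obtain r where r: "strict_mono r" "(\<lambda>k. Xs (r k)) \<longlonglongrightarrow> X"
    using assms(2) by (auto simp: limit_set_def o_def)
  have "(\<lambda>k. Xs (r k) + (Xs (Suc (r k)) - Xs (r k))) \<longlonglongrightarrow> X + 0"
    using r(2) LIMSEQ_subseq_LIMSEQ[OF steps r(1)] by (intro tendsto_add) (auto simp: o_def)
  then have "(\<lambda>k. Xs (Suc (r k))) \<longlonglongrightarrow> X"
    by simp
  show ?thesis
  proof (rule LIMSEQ_le)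
    show "(\<lambda>k. model (Xs (r k)) (Xs (Suc (r k)))) \<longlonglongrightarrow> model X X"
      by (rule tendsto_model[OF r(2) \<open>(\<lambda>k. Xs (Suc (r k))) \<longlonglongrightarrow> X\<close>])
    show "(\<lambda>k. model (Xs (r k)) Y) \<longlonglongrightarrow> model X Y"
      by (rule tendsto_model[OF r(2) tendsto_const])
    show "\<exists>N. \<forall>k\<ge>N. model (Xs (r k)) (Xs (Suc (r k))) \<le> model (Xs (r k)) Y"
      using step by blast
  qed
qed

lemma limit_set_subset_crit:
  assumes "(\<lambda>t. Xs (Suc t) - Xs t) \<longlonglongrightarrow> 0"
  shows "limit_set Xs \<subseteq> crit objective"
  using zero_in_regular_subdiff_if_fixed_point limit_point_fixed_point[OF assms]
    crit_if_zero_in_regular_subdiff by blast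

lemma objective_iterates_bounded:
  assumes "filterlim objective at_top at_infinity"
  shows "bounded (range Xs)"
  using bounded_range_if_coercive[OF assms objective_iterates_le_initial] .

theorem limit_set_properties:
  assumes h_nonneg: "\<And>a. 0 \<le> a \<Longrightarrow> 0 \<le> h a"
    and bdd_f: "bdd_below (range f)" and coercive_f: "filterlim f at_top at_infinity"
  shows "limit_set Xs \<noteq> {}" and "limit_set Xs \<subseteq> crit objective"
    and "(\<lambda>t. infdist (Xs t) (limit_set Xs)) \<longlonglongrightarrow> 0"
    and "compact (limit_set Xs)" and "connected (limit_set Xs)"
    and "\<exists>c. \<forall>X\<in>limit_set Xs. objective X = c"
proof -
  have f_le: "f X \<le> objective X" for X
    using h_nonneg sigma_nonneg by (simp add: objective_def sum_nonneg)
  obtain b where b: "\<And>X. b \<le> f X"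
    using bdd_f by (auto simp: bdd_below_def)
  have bdd: "bdd_below (range objective)"
  proof (rule bdd_belowI2)
    show "b \<le> objective X" for X
      using b[of X] f_le[of X] by linarith
  qed
  have "filterlim objective at_top at_infinity"
    by (rule filterlim_at_top_mono[OF coercive_f]) (simp add: f_le)
  then have bounded: "bounded (range Xs)"
    by (rule objective_iterates_bounded)
  have steps: "(\<lambda>t. Xs (Suc t) - Xs t) \<longlonglongrightarrow> 0"
    using steps_tendsto_0[OF bdd] .
  then have "(\<lambda>t. dist (Xs (Suc t)) (Xs t)) \<longlonglongrightarrow> 0"
    using tendsto_norm_zero by (simp add: dist_norm)
  then show "connected (limit_set Xs)"
    by (rule connected_limit_set[OF bounded])
  show "limit_set Xs \<noteq> {}"
    by (rule limit_set_nonempty[OF bounded])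
  show "compact (limit_set Xs)"
    by (rule compact_limit_set[OF bounded])
  show "(\<lambda>t. infdist (Xs t) (limit_set Xs)) \<longlonglongrightarrow> 0"
    by (rule infdist_limit_set_tendsto_0[OF bounded])
  show "limit_set Xs \<subseteq> crit objective"
    using limit_set_subset_crit[OF steps] .
  obtain c where "(\<lambda>t. objective (Xs t)) \<longlonglongrightarrow> c"
    using objective_iterates_tendsto[OF bdd] .
  then show "\<exists>c. \<forall>X\<in>limit_set Xs. objective X = c"
    using limit_set_level[OF isCont_objective] by (intro exI ballI)
qed

end

theorem lemma4:
  fixes f :: "real^'n^'m \<Rightarrow> real" and gradf :: "real^'n^'m \<Rightarrow> real^'n^'m"
    and p \<epsilon> L \<mu> :: real and X0 :: "real^'n^'m" and Xs :: "nat \<Rightarrow> real^'n^'m"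
    and F :: "real^'n^'m \<Rightarrow> real"
  assumes mn: "CARD('n) \<le> CARD('m)"
    and p: "p \<in> \<rat>" "0 < p" "p < 1"
    and eps: "0 < \<epsilon>"
    and bdd: "bdd_below (range f)"
    and semialg: "semialgebraic_fun f"
    and coercive: "filterlim f at_top at_infinity"
    and grad: "\<And>X. (f has_derivative (\<lambda>H. inner (gradf X) H)) (at X)"
    and L: "0 < L" "\<And>X Y. norm (gradf X - gradf Y) \<le> L * norm (X - Y)"
    and F_def: "F = (\<lambda>X. f X + (\<Sum>i<CARD('n). (\<bar>sing_val X i\<bar> + \<epsilon>) powr p))"
    and mu: "0 < \<mu>" "\<mu> < 1 / L"
    and X0: "Xs 0 = X0"
    and step: "\<And>t Y.
       (1/2) * (norm (Xs (Suc t) - (Xs t - \<mu> *\<^sub>R gradf (Xs t))))\<^sup>2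
         + \<mu> * (\<Sum>i<CARD('n). (p / (sing_val (Xs t) i + \<epsilon>) powr (1 - p)) * \<bar>sing_val (Xs (Suc t)) i\<bar>)
       \<le> (1/2) * (norm (Y - (Xs t - \<mu> *\<^sub>R gradf (Xs t))))\<^sup>2
         + \<mu> * (\<Sum>i<CARD('n). (p / (sing_val (Xs t) i + \<epsilon>) powr (1 - p)) * \<bar>sing_val Y i\<bar>)"
  shows "(limit_set Xs \<noteq> {} \<and> limit_set Xs \<subseteq> crit F)
    \<and> ((\<lambda>t. infdist (Xs t) (limit_set Xs)) \<longlonglongrightarrow> 0)
    \<and> (limit_set Xs \<noteq> {} \<and> compact (limit_set Xs) \<and> connected (limit_set Xs))
    \<and> (\<exists>c. \<forall>X \<in> limit_set Xs. F X = c)"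
proof -
  have sigma: "0 \<le> sing_val X i" "\<bar>sing_val X i - sing_val Y i\<bar> \<le> norm (X - Y)"
    for X Y :: "real^'n^'m" and i
    using sing_val_nonneg[OF mn] sing_val_lipschitz[OF mn] by auto
  interpret reweighted_prox_grad f gradf L \<mu> "\<lambda>i X. sing_val X i" "CARD('n)"
    "\<lambda>a. (a + \<epsilon>) powr p" "\<lambda>a. p / (a + \<epsilon>) powr (1 - p)"
  proof
    show "\<mu> * L < 1"
      using mu L(1) by (simp add: field_simps)
    show "(b + \<epsilon>) powr p \<le> (a + \<epsilon>) powr p + p / (a + \<epsilon>) powr (1 - p) * (b - a)"
      if "0 \<le> a" "0 \<le> b" for a b
      using powr_le_tangent[of "a + \<epsilon>" "b + \<epsilon>" p] that eps p by simp
  qed (use grad L(2) mu(1) sigma eps in \<open>auto intro!: continuous_intros\<close>)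
  interpret reweighted_prox_grad_sequence f gradf L \<mu> "\<lambda>i X. sing_val X i" "CARD('n)"
    "\<lambda>a. (a + \<epsilon>) powr p" "\<lambda>a. p / (a + \<epsilon>) powr (1 - p)" Xs
    by unfold_locales (use step in \<open>simp add: model_def sigma(1) abs_of_nonneg\<close>)
  have F_objective: "F = objective"
    by (simp add: F_def objective_def sigma(1) abs_of_nonneg fun_eq_iff)
  have "0 \<le> (a + \<epsilon>) powr p" for a
    by simp
  from limit_set_properties[OF this bdd coercive] show ?thesis
    unfolding F_objective by blast
qed

end
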